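(* Let $G$ be a simple 3-connected graph with $n\geq 5$ vertices in which every vertex has degree at most $4$. Then one can add edges (but no vertices) to $G$ so that the resulting multigraph $G'$ has the following properties: - $G'$ is 3-connected; - $G'$ is 4-regular; - $G'$ has no loops; - $G'$ has at most one double edge. That is, at most one pair of vertices is joined by more than one edge, and such a pair is joined by exactly two edges.
   Context: A (multi)graph is 3-connected if it has more than $3$ vertices and, for any two vertices $u,v$, the graph obtained by deleting $u$ and $v$ is connected. A graph is 4-regular if every vertex has degree exactly $4$, with degrees counted with edge multiplicity. *)

theory Defs
  imports Main
begin

text \<open>A (finite, undirected) multigraph on vertex set V is given by a multiplicity
function m: m u v is the number of edges joining u and v (m v v = number of loops at v).\<close>

definition multigraph :: "'a set \<Rightarrow> ('a \<Rightarrow> 'a \<Rightarrow> nat) \<Rightarrow> bool" where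
  "multigraph V m \<longleftrightarrow> finite V \<and> (\<forall>u v. m u v = m v u) \<and>
     (\<forall>u v. 0 < m u v \<longrightarrow> u \<in> V \<and> v \<in> V)"

definition simple_graph :: "'a set \<Rightarrow> ('a \<Rightarrow> 'a \<Rightarrow> nat) \<Rightarrow> bool" where
  "simple_graph V m \<longleftrightarrow> multigraph V m \<and> (\<forall>u v. m u v \<le> 1) \<and> (\<forall>v. m v v = 0)"

text \<open>Degree counted with multiplicity; a loop contributes 2.\<close>
definition degree :: "'a set \<Rightarrow> ('a \<Rightarrow> 'a \<Rightarrow> nat) \<Rightarrow> 'a \<Rightarrow> nat" where
  "degree V m v = (\<Sum>u\<in>V. m v u) + m v v"

definition connected_on :: "'a set \<Rightarrow> ('a \<Rightarrow> 'a \<Rightarrow> nat) \<Rightarrow> bool" where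
  "connected_on S m \<longleftrightarrow>
     (\<forall>x\<in>S. \<forall>y\<in>S. (x, y) \<in> {(a, b). a \<in> S \<and> b \<in> S \<and> 0 < m a b}\<^sup>*)"

definition three_connected :: "'a set \<Rightarrow> ('a \<Rightarrow> 'a \<Rightarrow> nat) \<Rightarrow> bool" where
  "three_connected V m \<longleftrightarrow> card V > 3 \<and>
     (\<forall>u\<in>V. \<forall>v\<in>V. connected_on (V - {u, v}) m)"

end

theory Submission
  imports Defs
begin

text \<open>In a 3-connected graph with at least five vertices every vertex has at least three
  neighbours, so all degrees are 3 or 4, and by the handshake lemma the set D of vertices of
  degree 3 has even size. Adding a perfect matching of D (on arbitrary pairs, not necessarily
  edges of G) makes the graph 4-regular and, being a supergraph, keeps it 3-connected. Inside D
  every vertex has at most three neighbours, and D contains no K4, since a K4 of degree-3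
  vertices would be a whole component. Hence as long as at least four vertices of D remain
  unmatched, two of them are non-adjacent and can be matched without creating a double edge;
  only the last pair may already be adjacent.\<close>

definition single_edge :: "'a \<Rightarrow> 'a \<Rightarrow> 'a \<Rightarrow> 'a \<Rightarrow> nat" where
  "single_edge x y u v = (if {u, v} = {x, y} then 1 else 0)"

definition perfect_matching :: "'a set \<Rightarrow> ('a \<Rightarrow> 'a \<Rightarrow> nat) \<Rightarrow> bool" where
  "perfect_matching D a \<longleftrightarrow> simple_graph D a \<and> (\<forall>x\<in>D. (\<Sum>y\<in>D. a x y) = 1)"

definition at_most_one_double_edge :: "('a \<Rightarrow> 'a \<Rightarrow> nat) \<Rightarrow> bool" where
  "at_most_one_double_edge m \<longleftrightarrow> (\<forall>a b c d. 2 \<le> m a b \<and> 2 \<le> m c d \<longrightarrow> {a, b} = {c, d})"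

definition neighbours :: "'a set \<Rightarrow> ('a \<Rightarrow> 'a \<Rightarrow> nat) \<Rightarrow> 'a \<Rightarrow> 'a set" where
  "neighbours V m v = {u \<in> V - {v}. 0 < m v u}"

definition clique :: "('a \<Rightarrow> 'a \<Rightarrow> nat) \<Rightarrow> 'a set \<Rightarrow> bool" where
  "clique m S \<longleftrightarrow> (\<forall>x\<in>S. \<forall>y\<in>S. x \<noteq> y \<longrightarrow> 0 < m x y)"

lemma single_edge_le_1: "single_edge x y u v \<le> 1"
  by (simp add: single_edge_def)

lemma sum_single_edge:
  assumes "finite D" "x \<in> D" "y \<in> D" "x \<noteq> y"
  shows "(\<Sum>v\<in>D. single_edge x y u v) = (if u \<in> {x, y} then 1 else 0)"
proof -
  have "(\<Sum>v\<in>D. single_edge x y u v) =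
      (\<Sum>v\<in>D. if v = (if u = x then y else x) \<and> u \<in> {x, y} then 1 else 0)"
    using assms(4) by (intro sum.cong) (auto simp: single_edge_def doubleton_eq_iff)
  then show ?thesis
    using assms by (simp add: sum.If_cases)
qed

subsection \<open>Perfect matchings\<close>

lemma perfect_matching_empty: "perfect_matching {} (\<lambda>u v. 0)"
  by (simp add: perfect_matching_def simple_graph_def multigraph_def)

lemma perfect_matching_insert_pair:
  assumes a: "perfect_matching D a" and "x \<notin> D" "y \<notin> D" "x \<noteq> y"
  shows "perfect_matching (insert x (insert y D)) (\<lambda>u v. a u v + single_edge x y u v)"
    (is "perfect_matching ?D ?a")
proof -
  have fin: "finite D" and sym: "\<forall>u v. a u v = a v u" and le1: "\<forall>u v. a u v \<le> 1"
    and loop: "\<forall>u. a u u = 0" and supp: "\<forall>u v. 0 < a u v \<longrightarrow> u \<in> D \<and> v \<in> D"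
    and one: "\<forall>u\<in>D. (\<Sum>v\<in>D. a u v) = 1"
    using a by (auto simp: perfect_matching_def simple_graph_def multigraph_def)
  have disjoint: "a u v = 0 \<or> single_edge x y u v = 0" for u v
    using supp assms(2,3) unfolding single_edge_def doubleton_eq_iff by (metis neq0_conv)
  have sum_a: "(\<Sum>v\<in>?D. a u v) = (if u \<in> D then 1 else 0)" for u
  proof -
    have "(\<Sum>v\<in>?D. a u v) = (\<Sum>v\<in>D. a u v)"
      using fin supp by (intro sum.mono_neutral_right) auto
    then show ?thesis
      using one supp by (auto intro: sum.neutral)
  qed
  have "(\<Sum>v\<in>?D. ?a u v) = 1" if "u \<in> ?D" for u
    using that assms(2,3) fin sum_a[of u] sum_single_edge[of ?D x y u] \<open>x \<noteq> y\<close>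
    by (auto simp: sum.distrib)
  moreover have "?a u v \<le> 1" for u v
    using disjoint[of u v] le1 single_edge_le_1[of x y u v] by auto
  moreover have "?a u u = 0" for u
    using loop \<open>x \<noteq> y\<close> by (auto simp: single_edge_def doubleton_eq_iff)
  moreover have "?a u v = ?a v u" for u v
    using sym by (simp add: single_edge_def insert_commute)
  moreover have "u \<in> ?D \<and> v \<in> ?D" if "0 < ?a u v" for u v
    using that supp by (auto simp: single_edge_def doubleton_eq_iff split: if_splits)
  ultimately show ?thesis
    using fin by (auto simp: perfect_matching_def simple_graph_def multigraph_def)
qed

lemma at_most_one_double_edge_add_edge:
  assumes "at_most_one_double_edge f" "f x y = 0" "f y x = 0"
  shows "at_most_one_double_edge (\<lambda>u v. f u v + single_edge x y u v)"
proof -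
  have "2 \<le> f u v" if "2 \<le> f u v + single_edge x y u v" for u v
    using that assms(2,3) by (auto simp: single_edge_def doubleton_eq_iff split: if_splits)
  then show ?thesis
    using assms(1) unfolding at_most_one_double_edge_def by blast
qed

lemma at_most_one_double_edge_add_edge_simple:
  assumes "\<forall>u v. f u v \<le> 1"
  shows "at_most_one_double_edge (\<lambda>u v. f u v + single_edge x y u v)"
proof -
  have "{u, v} = {x, y}" if "2 \<le> f u v + single_edge x y u v" for u v
    using that assms[rule_format, of u v] by (auto simp: single_edge_def split: if_splits)
  then show ?thesis
    unfolding at_most_one_double_edge_def by blast
qed

lemma neighbours_mono: "D' \<subseteq> D \<Longrightarrow> neighbours D' m x \<subseteq> neighbours D m x"
  by (auto simp: neighbours_def)

lemma exists_non_adjacent_pair: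
  assumes "finite D" "4 \<le> card D"
    and "\<forall>x\<in>D. card (neighbours D m x) \<le> 3"
    and "\<forall>S\<subseteq>D. card S = 4 \<longrightarrow> \<not> clique m S"
  shows "\<exists>x\<in>D. \<exists>y\<in>D. x \<noteq> y \<and> m x y = 0"
proof (cases "card D = 4")
  case True
  then have "\<not> clique m D"
    using assms(4) by blast
  then obtain x y where "x \<in> D" "y \<in> D" "x \<noteq> y" "m x y = 0"
    unfolding clique_def by (metis neq0_conv)
  then show ?thesis
    by blast
next
  case False
  then obtain x where x: "x \<in> D"
    using assms(2) by fastforce
  have "card (neighbours D m x) < card (D - {x})"
    using assms(1-3) False x by fastforce
  moreover have "finite (neighbours D m x)"
    using assms(1) by (simp add: neighbours_def)
  ultimately have "\<not> D - {x} \<subseteq> neighbours D m x"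
    by (meson card_mono leD)
  then obtain y where "y \<in> D" "y \<noteq> x" "m x y = 0"
    by (auto simp: neighbours_def)
  then show ?thesis
    using x by metis
qed

lemma perfect_matching_with_one_double_edge:
  assumes sym: "\<forall>u v. m u v = m v u" and le1: "\<forall>u v. m u v \<le> 1"
    and "finite D" "even (card D)" "\<forall>x\<in>D. card (neighbours D m x) \<le> 3"
    and "\<forall>S\<subseteq>D. card S = 4 \<longrightarrow> \<not> clique m S"
  shows "\<exists>a. perfect_matching D a \<and> at_most_one_double_edge (\<lambda>u v. m u v + a u v)"
  using assms(3-6)
proof (induction "card D" arbitrary: D rule: less_induct)
  case less
  have "card D = 0 \<or> card D = 2 \<or> 4 \<le> card D"
    using \<open>even (card D)\<close> by presburger
  then consider "card D = 0" | "card D = 2" | "4 \<le> card D"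
    by fastforce
  then show ?case
  proof cases
    case 1
    then have "D = {}"
      using less.prems(1) by simp
    have "\<not> 2 \<le> m u v" for u v
      using le1[rule_format, of u v] by linarith
    then have "at_most_one_double_edge (\<lambda>u v. m u v + 0)"
      by (simp add: at_most_one_double_edge_def)
    then show ?thesis
      using perfect_matching_empty \<open>D = {}\<close> by (intro exI[of _ "\<lambda>u v. 0"]) simp
  next
    case 2
    then obtain x y where "x \<noteq> y" "D = {x, y}"
      by (meson card_2_iff)
    then show ?thesis
      using perfect_matching_insert_pair[OF perfect_matching_empty, of x y]
        at_most_one_double_edge_add_edge_simple[OF le1, of x y] by auto
  next
    case 3
    then obtain x y where xy: "x \<in> D" "y \<in> D" "x \<noteq> y" "m x y = 0"
      using exists_non_adjacent_pair less.prems by blast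
    define D' where "D' = D - {x, y}"
    have D: "D = insert x (insert y D')" "x \<notin> D'" "y \<notin> D'"
      using xy by (auto simp: D'_def)
    have "finite D'" "card D' = card D - 2"
      using xy less.prems(1) by (simp_all add: D'_def)
    moreover have "card (neighbours D' m z) \<le> 3" if "z \<in> D'" for z
    proof -
      have "card (neighbours D' m z) \<le> card (neighbours D m z)"
        using less.prems(1) by (intro card_mono neighbours_mono) (auto simp: D'_def neighbours_def)
      then show ?thesis
        using less.prems(3) that by (auto simp: D'_def)
    qed
    moreover have "\<forall>S\<subseteq>D'. card S = 4 \<longrightarrow> \<not> clique m S"
      using less.prems(4) by (auto simp: D'_def)
    ultimately obtain a where a: "perfect_matching D' a"
      and double: "at_most_one_double_edge (\<lambda>u v. m u v + a u v)"
      using less.hyps[of D'] less.prems(2) 3 by auto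
    have "a x y = 0" "a y x = 0"
      using a D(2) by (auto simp: perfect_matching_def simple_graph_def multigraph_def)
    then have "at_most_one_double_edge (\<lambda>u v. (m u v + a u v) + single_edge x y u v)"
      using xy(4) sym by (intro at_most_one_double_edge_add_edge[OF double]) auto
    moreover have "perfect_matching D (\<lambda>u v. a u v + single_edge x y u v)"
      using perfect_matching_insert_pair[OF a D(2,3) xy(3)] D(1) by simp
    ultimately show ?thesis
      by (intro exI[of _ "\<lambda>u v. a u v + single_edge x y u v"]) (simp add: add.assoc)
  qed
qed

lemma perfect_matching_add_degree:
  assumes "finite V" "D \<subseteq> V" "perfect_matching D a"
  shows "degree V (\<lambda>u v. m u v + a u v) v = degree V m v + (if v \<in> D then 1 else 0)"
proof -
  have loop: "a v v = 0" and supp: "\<forall>u v. 0 < a u v \<longrightarrow> u \<in> D \<and> v \<in> D"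
    and one: "\<forall>u\<in>D. (\<Sum>w\<in>D. a u w) = 1"
    using assms(3) by (auto simp: perfect_matching_def simple_graph_def multigraph_def)
  have "(\<Sum>u\<in>V. a v u) = (\<Sum>u\<in>D. a v u)"
    using assms(1,2) supp by (intro sum.mono_neutral_right) auto
  also have "\<dots> = (if v \<in> D then 1 else 0)"
    using one supp by (auto intro: sum.neutral)
  finally show ?thesis
    using loop by (simp add: degree_def sum.distrib)
qed

lemma multigraph_add:
  assumes "multigraph V m" "multigraph D a" "D \<subseteq> V"
  shows "multigraph V (\<lambda>u v. m u v + a u v)"
proof -
  have "\<forall>u v. 0 < m u v \<or> 0 < a u v \<longrightarrow> u \<in> V \<and> v \<in> V"
    using assms unfolding multigraph_def by blast
  then show ?thesis
    using assms(1,2) unfolding multigraph_def by auto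
qed

subsection \<open>Degrees and connectivity\<close>

lemma card_neighbours_eq_degree:
  assumes "simple_graph V m"
  shows "card (neighbours V m v) = degree V m v"
proof -
  have fin: "finite V" and le1: "\<forall>u v. m u v \<le> 1" and loop: "\<forall>u. m u u = 0"
    using assms by (auto simp: simple_graph_def multigraph_def)
  have "degree V m v = (\<Sum>u\<in>V. if u \<in> neighbours V m v then 1 else 0)"
  proof -
    have "m v u = (if u \<in> neighbours V m v then 1 else 0)" if "u \<in> V" for u
      using that le1[rule_format, of v u] loop by (auto simp: neighbours_def)
    then show ?thesis
      using loop by (simp add: degree_def)
  qed
  also have "\<dots> = card (neighbours V m v)"
    using fin by (simp add: sum.If_cases neighbours_def Int_def)
  finally show ?thesis ..
qed

lemma even_sum_degree:
  assumes "finite V" "\<forall>u v. m u v = m v u"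
  shows "even (\<Sum>v\<in>V. degree V m v)"
proof -
  have "even ((\<Sum>v\<in>V. \<Sum>u\<in>V. m v u) + (\<Sum>v\<in>V. m v v))"
    using assms(1)
  proof (induction V rule: finite_induct)
    case empty
    then show ?case by simp
  next
    case (insert x F)
    have "(\<Sum>v\<in>F. m v x) = (\<Sum>u\<in>F. m x u)"
      using assms(2) by (intro sum.cong) auto
    then have "(\<Sum>v\<in>insert x F. \<Sum>u\<in>insert x F. m v u) + (\<Sum>v\<in>insert x F. m v v)
        = ((\<Sum>v\<in>F. \<Sum>u\<in>F. m v u) + (\<Sum>v\<in>F. m v v)) + 2 * ((\<Sum>u\<in>F. m x u) + m x x)"
      using insert.hyps by (simp add: sum.distrib)
    then show ?case
      using insert.IH by simp
  qed
  then show ?thesis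
    by (simp add: degree_def sum.distrib)
qed

lemma connected_on_mono:
  assumes "\<forall>u v. m u v \<le> m' u v" "connected_on S m"
  shows "connected_on S m'"
proof -
  have "{(a, b). a \<in> S \<and> b \<in> S \<and> 0 < m a b} \<subseteq> {(a, b). a \<in> S \<and> b \<in> S \<and> 0 < m' a b}"
    using assms(1) by (auto intro: less_le_trans)
  then show ?thesis
    using assms(2) rtrancl_mono unfolding connected_on_def by blast
qed

lemma three_connected_mono:
  "\<forall>u v. m u v \<le> m' u v \<Longrightarrow> three_connected V m \<Longrightarrow> three_connected V m'"
  unfolding three_connected_def using connected_on_mono by blast

lemma rtrancl_leaves_set:
  assumes "(x, z) \<in> R\<^sup>*" "x \<in> S" "z \<notin> S"
  shows "\<exists>a b. (a, b) \<in> R \<and> a \<in> S \<and> b \<notin> S"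
  using assms by (induction rule: rtrancl_induct) blast+

lemma connected_on_edge_leaving:
  assumes "connected_on W m" "x \<in> W \<inter> S" "z \<in> W - S"
  shows "\<exists>a\<in>W \<inter> S. \<exists>b\<in>W - S. 0 < m a b"
proof -
  have "(x, z) \<in> {(a, b). a \<in> W \<and> b \<in> W \<and> 0 < m a b}\<^sup>*"
    using assms unfolding connected_on_def by (meson DiffD1 IntD1)
  from rtrancl_leaves_set[OF this, of S] show ?thesis
    using assms(2,3) by auto
qed

lemma subset_doubleton_if_card_le_2:
  assumes "finite N" "card N \<le> 2" "N \<subseteq> A" "w \<in> A"
  obtains u1 u2 where "u1 \<in> A" "u2 \<in> A" "N \<subseteq> {u1, u2}"
proof -
  consider "card N = 0" | "card N = 1" | "card N = 2"
    using assms(2) by linarith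
  then show ?thesis
  proof cases
    case 1
    then show ?thesis
      using that assms(1,4) by simp
  next
    case 2
    then obtain a where "N = {a}"
      by (meson card_1_singletonE)
    then show ?thesis
      using that assms(3) by auto
  next
    case 3
    then obtain a b where "N = {a, b}"
      by (meson card_2_iff)
    then show ?thesis
      using that assms(3) by auto
  qed
qed

lemma three_connected_card_neighbours:
  assumes conn: "three_connected V m" and v: "v \<in> V"
  shows "3 \<le> card (neighbours V m v)"
proof (rule ccontr)
  assume "\<not> 3 \<le> card (neighbours V m v)"
  have card_V: "3 < card V"
    using conn by (simp add: three_connected_def)
  then have fin: "finite V"
    using card.infinite by fastforce
  have "card (V - {v}) \<noteq> 0"
    using card_V fin v by simp
  then obtain w where "w \<in> V - {v}"
    by (metis card.empty ex_in_conv)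
  moreover have "neighbours V m v \<subseteq> V - {v}" "finite (neighbours V m v)"
    using fin by (auto simp: neighbours_def)
  ultimately obtain u1 u2 where u: "u1 \<in> V - {v}" "u2 \<in> V - {v}"
    and N: "neighbours V m v \<subseteq> {u1, u2}"
    using subset_doubleton_if_card_le_2[of "neighbours V m v" "V - {v}" w]
      \<open>\<not> 3 \<le> card (neighbours V m v)\<close> by auto
  have "card {v, u1, u2} < card V"
    using card_V by (simp add: card_insert_if)
  then have "\<not> V \<subseteq> {v, u1, u2}"
    using card_mono[of "{v, u1, u2}" V] by auto
  then obtain z where z: "z \<in> V - {v, u1, u2}"
    by blast
  have "connected_on (V - {u1, u2}) m"
    using conn u unfolding three_connected_def by blast
  then obtain b where "b \<in> V - {u1, u2} - {v}" "0 < m v b"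
    using connected_on_edge_leaving[of "V - {u1, u2}" m v "{v}" z] u v z by blast
  then show False
    using N by (auto simp: neighbours_def)
qed

lemma three_connected_closed_set_eq:
  assumes conn: "three_connected V m" and "S \<subseteq> V" "u \<in> S" "x \<in> S" "u \<noteq> x"
    and closed: "\<forall>w\<in>S. neighbours V m w \<subseteq> S"
  shows "S = V"
proof (rule ccontr)
  assume "S \<noteq> V"
  then obtain z where "z \<in> V - S"
    using assms(2) by blast
  moreover have "connected_on (V - {u, u}) m"
    using conn assms(2,3) unfolding three_connected_def by blast
  ultimately obtain a b where "a \<in> S" "b \<in> V - S" "0 < m a b"
    using connected_on_edge_leaving[of "V - {u, u}" m x S z] assms(2-5) by auto
  then show False
    using closed by (auto simp: neighbours_def)
qed

lemma three_connected_no_isolated_K4: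
  assumes conn: "three_connected V m" and "4 < card V" "S \<subseteq> V" "card S = 4"
    and low: "\<forall>w\<in>S. card (neighbours V m w) \<le> 3"
  shows "\<not> clique m S"
proof
  assume clique: "clique m S"
  have fin: "finite V"
    using assms(2) card.infinite by fastforce
  have "neighbours V m w \<subseteq> S" if w: "w \<in> S" for w
  proof -
    have "S - {w} \<subseteq> neighbours V m w"
      using clique assms(3) w by (auto simp: clique_def neighbours_def)
    moreover have "card (neighbours V m w) \<le> card (S - {w})"
      using low w assms(4) by simp
    moreover have "finite (neighbours V m w)"
      using fin by (simp add: neighbours_def)
    ultimately show ?thesis
      using card_seteq by blast
  qed
  moreover obtain u x where "u \<in> S" "x \<in> S" "u \<noteq> x"
  proof -
    obtain u where u: "u \<in> S"
      using assms(4) by fastforce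
    then have "card (S - {u}) = 3"
      using assms(4) by (simp add: card.infinite)
    then obtain x where "x \<in> S - {u}"
      by (metis card.empty ex_in_conv zero_neq_numeral)
    then show ?thesis
      using that u by blast
  qed
  ultimately have "S = V"
    using three_connected_closed_set_eq[OF conn assms(3)] by blast
  then show False
    using assms(2,4) by simp
qed

lemma degree_eq_3_or_4:
  assumes "simple_graph V m" "three_connected V m" "v \<in> V" "degree V m v \<le> 4"
  shows "degree V m v = 3 \<or> degree V m v = 4"
proof -
  have "3 \<le> degree V m v"
    using three_connected_card_neighbours[OF assms(2,3)] card_neighbours_eq_degree[OF assms(1)]
    by simp
  then show ?thesis
    using assms(4) by arith
qed

lemma odd_degree_vertices_matching:
  assumes simple: "simple_graph V m" and conn: "three_connected V m" and "5 \<le> card V"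
    and "\<forall>v\<in>V. degree V m v \<le> 4"
  shows "\<exists>a. perfect_matching {v \<in> V. odd (degree V m v)} a \<and>
    at_most_one_double_edge (\<lambda>u v. m u v + a u v)"
proof -
  define D where "D = {v \<in> V. odd (degree V m v)}"
  have fin: "finite V" and sym: "\<forall>u v. m u v = m v u" and le1: "\<forall>u v. m u v \<le> 1"
    using simple unfolding simple_graph_def multigraph_def by auto
  have D: "D \<subseteq> V" "finite D"
    using fin by (auto simp: D_def)
  have low: "card (neighbours V m v) = 3" if "v \<in> D" for v
    using degree_eq_3_or_4[OF simple conn] assms(4) that card_neighbours_eq_degree[OF simple]
    by (fastforce simp: D_def)
  have "even (card D)"
    using even_sum_degree[OF fin sym] fin by (simp add: even_sum_iff D_def)
  moreover have "card (neighbours D m x) \<le> 3" if "x \<in> D" for x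
  proof -
    have "card (neighbours D m x) \<le> card (neighbours V m x)"
      using fin D(1) by (intro card_mono neighbours_mono) (auto simp: neighbours_def)
    then show ?thesis
      using low[OF that] by linarith
  qed
  moreover have "\<not> clique m S" if "S \<subseteq> D" "card S = 4" for S
    using that assms(3) D(1) low by (intro three_connected_no_isolated_K4[OF conn]) auto
  ultimately show ?thesis
    using perfect_matching_with_one_double_edge[OF sym le1 D(2)] by (simp add: D_def)
qed

theorem lemma1:
  fixes V :: "'a set" and m :: "'a \<Rightarrow> 'a \<Rightarrow> nat"
  assumes "simple_graph V m"
    and "three_connected V m"
    and "card V \<ge> 5"
    and "\<forall>v\<in>V. degree V m v \<le> 4"
  shows "\<exists>m'. multigraph V m' \<and> (\<forall>u v. m u v \<le> m' u v) \<and>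
           three_connected V m' \<and>
           (\<forall>v\<in>V. degree V m' v = 4) \<and>
           (\<forall>v. m' v v = 0) \<and>
           (\<forall>u v. m' u v \<le> 2) \<and>
           (\<forall>a b c d. 2 \<le> m' a b \<and> 2 \<le> m' c d \<longrightarrow> {a, b} = {c, d})"
proof -
  define D where "D = {v \<in> V. odd (degree V m v)}"
  obtain a where a: "perfect_matching D a"
    and double: "at_most_one_double_edge (\<lambda>u v. m u v + a u v)"
    using odd_degree_vertices_matching[OF assms] unfolding D_def by blast
  have fin: "finite V" and D: "D \<subseteq> V" and a_simple: "simple_graph D a"
    using assms(1) a by (auto simp: D_def simple_graph_def multigraph_def perfect_matching_def)
  have "degree V m v + (if v \<in> D then 1 else 0) = 4" if "v \<in> V" for v
    using degree_eq_3_or_4[OF assms(1,2) that] assms(4) that by (auto simp: D_def)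
  then have "\<forall>v\<in>V. degree V (\<lambda>u v. m u v + a u v) v = 4"
    using perfect_matching_add_degree[OF fin D a] by simp
  moreover have "multigraph V (\<lambda>u v. m u v + a u v)"
    using multigraph_add assms(1) a_simple D by (auto simp: simple_graph_def)
  moreover have "three_connected V (\<lambda>u v. m u v + a u v)"
    using three_connected_mono[OF _ assms(2)] by simp
  moreover have "\<forall>u v. m u v + a u v \<le> 2"
    using assms(1) a_simple unfolding simple_graph_def by (metis add_mono one_add_one)
  ultimately show ?thesis
    using assms(1) a_simple double
    by (intro exI[of _ "\<lambda>u v. m u v + a u v"]) (auto simp: simple_graph_def at_most_one_double_edge_def)
qed

end
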